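(* Let $A$ be a finite set of integers with $|A|\ge 3$. Then $$|S_2(A)|=(|A|-1)\cdot 2-3\binom 22+1=2|A|-4$$ if and only if one of the following (i)–(v) holds. (i) $A=\{c,\pm d\}$ for some $c\in\mathbb Z$ and $d\in\mathbb Z^+$ with $|c|\neq d$. (ii) $A=\{\pm c,\pm d\}$ for some $c,d\in\mathbb Z^+$ with $c\neq d$. (iii) $A=\{\pm d\}\cup \{c\pm d\}$ for some $c\in\mathbb Z$ and $d\in\mathbb Z^+$ with $c\neq 0,\pm 2d$. (iv) $A=\{rd:\ s\le r\le t\}$ for some integers $d\neq0$, $s\le-1$ and $t\ge1$ with $t-s\ge4$. (v) $A=\{(2r-1)d:\ s\le r\le t\}$ for some integers $d\neq0$, $s\le0$ and $t\ge 1$ with $t-s\ge4$.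
   Context: For a finite set $A\subseteq\mathbb Z$ and a positive integer $n$, define the restricted sumset $$S_n(A)=\{a_1+\cdots+a_n:\ a_1,\ldots,a_n\in A,\ \text{and}\ a_i^2\neq a_j^2\ \text{for}\ 1\le i<j\le n\}.$$ Notation: $\{\pm d\}=\{d,-d\}$, $\{c\pm d\}=\{c+d,c-d\}$, $\mathbb Z^+=\{1,2,3,\ldots\}$. *)

theory Defs
  imports Main
begin

definition restricted_sumset :: "nat \<Rightarrow> int set \<Rightarrow> int set" where
  "restricted_sumset n A =
     {(\<Sum>i\<in>{1..n}. a i) | a. (\<forall>i\<in>{1..n}. a i \<in> A) \<and>
        (\<forall>i\<in>{1..n}. \<forall>j\<in>{1..n}. i < j \<longrightarrow> (a i)^2 \<noteq> (a j)^2)}"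

end

theory Submission
  imports Defs
begin

(* Since a^2 = b^2 only for b = a or b = -a, S_2(A) is the restricted sumset
   A \<hat>+ A = {a + b : a, b in A, a ~= b} (distinct_sumset A) with 0 removed.
   Adding a new maximum m to a set B creates at least the two new sums m + max B and
   m + max (B - {max B}), so |A \<hat>+ A| >= 2|A| - 3, and |S_2(A)| = 2|A| - 4 holds exactly
   when A contains a pair x, -x and |A \<hat>+ A| = 2|A| - 3.  Sets of size 3 and 4 with this
   property are found by inspection.  For |A| >= 5 the equality forces A to be an arithmetic
   progression, by induction from the five-element case: the maximum m of A added to all but
   the two largest elements of B = A - {m} must give old sums, which pins m to the next term of
   the progression B.  Finally, an arithmetic progression containing x and -x is symmetric
   about 0, so its terms are the multiples or the odd multiples of some d. *)

definition distinct_sumset :: "'a::plus set \<Rightarrow> 'a set" where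
  "distinct_sumset A = {a + b | a b. a \<in> A \<and> b \<in> A \<and> a \<noteq> b}"

lemma distinct_sumsetI: "a \<in> A \<Longrightarrow> b \<in> A \<Longrightarrow> a \<noteq> b \<Longrightarrow> a + b \<in> distinct_sumset A"
  unfolding distinct_sumset_def by blast

lemma distinct_sumset_subsetI:
  "(\<And>a b. a \<in> A \<Longrightarrow> b \<in> A \<Longrightarrow> a \<noteq> b \<Longrightarrow> a + b \<in> S) \<Longrightarrow> distinct_sumset A \<subseteq> S"
  unfolding distinct_sumset_def by blast

lemma distinct_sumset_mono: "B \<subseteq> A \<Longrightarrow> distinct_sumset B \<subseteq> distinct_sumset A"
  unfolding distinct_sumset_def by blast

lemma finite_distinct_sumset: "finite A \<Longrightarrow> finite (distinct_sumset A)"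
proof -
  have "distinct_sumset A \<subseteq> (\<lambda>(a, b). a + b) ` (A \<times> A)"
    unfolding distinct_sumset_def by auto
  then show "finite A \<Longrightarrow> ?thesis" by (auto intro: finite_subset)
qed

lemma zero_in_distinct_sumset_iff:
  fixes A :: "'a::linordered_ab_group_add set"
  shows "0 \<in> distinct_sumset A \<longleftrightarrow> (\<exists>x>0. x \<in> A \<and> - x \<in> A)"
proof
  assume "0 \<in> distinct_sumset A"
  then obtain a b where "a \<in> A" "b \<in> A" "a \<noteq> b" "a + b = 0"
    unfolding distinct_sumset_def by auto
  then have "b = - a" "a \<noteq> 0" by (auto simp: add_eq_0_iff)
  then have "a \<in> A \<and> - a \<in> A" "a > 0 \<or> - a > 0"
    using \<open>a \<in> A\<close> \<open>b \<in> A\<close> by auto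
  then show "\<exists>x>0. x \<in> A \<and> - x \<in> A" by (metis minus_minus)
next
  assume "\<exists>x>0. x \<in> A \<and> - x \<in> A"
  then obtain x where "x > 0" "x \<in> A" "- x \<in> A" by blast
  then show "0 \<in> distinct_sumset A"
    using distinct_sumsetI[of x A "- x"] by auto
qed

lemma restricted_sumset_2_eq: "restricted_sumset 2 A = distinct_sumset A - {0}"
proof -
  have two: "{1..2::nat} = {1, 2}" by auto
  have "restricted_sumset 2 A = {a 1 + a 2 | a :: nat \<Rightarrow> int. a 1 \<in> A \<and> a 2 \<in> A \<and> (a 1)\<^sup>2 \<noteq> (a 2)\<^sup>2}"
    unfolding restricted_sumset_def two by auto
  also have "\<dots> = {a + b | a b. a \<in> A \<and> b \<in> A \<and> a\<^sup>2 \<noteq> b\<^sup>2}"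
  proof (intro equalityI subsetI)
    fix x assume "x \<in> {a + b | a b. a \<in> A \<and> b \<in> A \<and> a\<^sup>2 \<noteq> b\<^sup>2}"
    then obtain a b where "x = a + b" "a \<in> A" "b \<in> A" "a\<^sup>2 \<noteq> b\<^sup>2" by blast
    then show "x \<in> {a 1 + a 2 | a :: nat \<Rightarrow> int. a 1 \<in> A \<and> a 2 \<in> A \<and> (a 1)\<^sup>2 \<noteq> (a 2)\<^sup>2}"
      by (intro CollectI exI[of _ "\<lambda>i::nat. if i = 1 then a else b"]) auto
  qed blast
  also have "\<dots> = distinct_sumset A - {0}"
    unfolding distinct_sumset_def power2_eq_iff by (auto simp: add_eq_0_iff) (metis minus_minus)
  finally show ?thesis .
qed

lemma distinct_sumset_le_two_largest:
  fixes B :: "'a::linordered_cancel_ab_semigroup_add set"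
  assumes "finite B" and "x \<in> distinct_sumset B"
  shows "x \<le> Max B + Max (B - {Max B})"
proof -
  obtain b b' where x: "x = b + b'" "b \<in> B" "b' \<in> B" "b \<noteq> b'"
    using assms(2) unfolding distinct_sumset_def by blast
  have "b \<le> Max B" "b' \<le> Max B" using x assms(1) by auto
  then have "min b b' \<in> B - {Max B}" "max b b' \<le> Max B"
    using x by (auto simp: min_def max_def)
  then have "min b b' \<le> Max (B - {Max B})" "max b b' \<le> Max B"
    using assms(1) by auto
  moreover have "x = max b b' + min b b'"
    using x(1) by (simp add: min_def max_def add.commute)
  ultimately show ?thesis by (simp add: add_mono)
qed

lemma card_distinct_sumset_insert_above:
  fixes B :: "'a::linordered_cancel_ab_semigroup_add set"
  assumes "finite B" "card B \<ge> 2" "\<And>b. b \<in> B \<Longrightarrow> b < m"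
  shows "card (distinct_sumset B) + 2 \<le> card (distinct_sumset (insert m B))"
proof -
  define b1 where "b1 = Max B"
  define b2 where "b2 = Max (B - {b1})"
  have "\<not> B \<subseteq> {b1}" using card_mono[of "{b1}" B] assms(2) by auto
  then have "B \<noteq> {}" "B - {b1} \<noteq> {}" by auto
  then have b1: "b1 \<in> B" and b2: "b2 \<in> B" "b2 < b1"
    using assms(1) Max_in[of "B - {b1}"] unfolding b1_def b2_def
    by (auto simp: order.strict_iff_order)
  have "x < m + b2" if "x \<in> distinct_sumset B" for x
  proof -
    have "x \<le> b1 + b2"
      using distinct_sumset_le_two_largest[OF assms(1) that] by (simp add: b1_def b2_def)
    also have "\<dots> < m + b2" using assms(3)[OF b1] by (rule add_strict_right_mono)
    finally show ?thesis .
  qed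
  moreover have "m + b2 < m + b1" using b2(2) by (rule add_strict_left_mono)
  ultimately have new: "m + b1 \<notin> distinct_sumset B" "m + b2 \<notin> distinct_sumset B"
    by (metis less_irrefl order.strict_trans)+
  have "distinct_sumset B \<union> {m + b1, m + b2} \<subseteq> distinct_sumset (insert m B)"
    using distinct_sumset_mono[of B "insert m B"] b1 b2 assms(3)
    by (auto intro!: distinct_sumsetI dest: order.strict_implies_not_eq)
  then have "card (distinct_sumset B \<union> {m + b1, m + b2}) \<le> card (distinct_sumset (insert m B))"
    using assms(1) by (intro card_mono finite_distinct_sumset) auto
  moreover have "card (distinct_sumset B \<union> {m + b1, m + b2}) = card (distinct_sumset B) + 2"
    using new \<open>m + b2 < m + b1\<close> assms(1) by (simp add: finite_distinct_sumset)
  ultimately show ?thesis by simp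
qed

theorem card_distinct_sumset_ge:
  fixes A :: "'a::linordered_cancel_ab_semigroup_add set"
  assumes "finite A" "card A \<ge> 2"
  shows "2 * card A - 3 \<le> card (distinct_sumset A)"
  using assms(2,1)
proof (induction "card A" arbitrary: A rule: nat_induct_at_least)
  case base
  then obtain x y where "A = {x, y}" "x \<noteq> y" by (auto simp: card_2_iff)
  then have "distinct_sumset A \<noteq> {}" using distinct_sumsetI[of x A y] by auto
  then show ?case
    using base finite_distinct_sumset[of A] by (simp add: Suc_leI card_gt_0_iff)
next
  case (Suc n)
  define B where "B = A - {Max A}"
  have "A \<noteq> {}" using Suc by auto
  then have "Max A \<in> A" using Suc by simp
  then have A: "A = insert (Max A) B" and "finite B" "card B = n"
    using Suc by (auto simp: B_def)
  have "\<And>b. b \<in> B \<Longrightarrow> b < Max A"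
    using Suc.prems by (auto simp: B_def order.strict_iff_order)
  then have "card (distinct_sumset B) + 2 \<le> card (distinct_sumset A)"
    using card_distinct_sumset_insert_above[of B "Max A"] A \<open>finite B\<close> \<open>card B = n\<close> Suc.hyps
    by simp
  moreover have "2 * n - 3 \<le> card (distinct_sumset B)"
    using Suc.hyps(2)[of B] \<open>finite B\<close> \<open>card B = n\<close> by simp
  ultimately show ?case using Suc.hyps by simp
qed

lemma distinct_sumset_arith_prog_subset:
  fixes a g s t :: int
  shows "distinct_sumset ((\<lambda>r. a + r * g) ` {s..t}) \<subseteq> (\<lambda>j. 2 * a + j * g) ` {2 * s + 1..2 * t - 1}"
proof (rule distinct_sumset_subsetI)
  fix x y assume "x \<in> (\<lambda>r. a + r * g) ` {s..t}" "y \<in> (\<lambda>r. a + r * g) ` {s..t}" "x \<noteq> y"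
  then obtain r r' where "r \<in> {s..t}" "r' \<in> {s..t}" "r \<noteq> r'" "x = a + r * g" "y = a + r' * g"
    by auto
  then have "x + y = 2 * a + (r + r') * g" "r + r' \<in> {2 * s + 1..2 * t - 1}"
    by (auto simp: algebra_simps)
  then show "x + y \<in> (\<lambda>j. 2 * a + j * g) ` {2 * s + 1..2 * t - 1}" by blast
qed

lemma distinct_sumset_arith_prog_le:
  fixes a g s t :: int
  assumes "g > 0" "x \<in> distinct_sumset ((\<lambda>r. a + r * g) ` {s..t})"
  shows "x \<le> 2 * a + (2 * t - 1) * g"
proof -
  obtain j where "j \<le> 2 * t - 1" "x = 2 * a + j * g"
    using distinct_sumset_arith_prog_subset assms(2) by fastforce
  then show ?thesis using assms(1) by (simp add: mult_right_mono)
qed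

lemma card_arith_prog:
  fixes a g s t :: int
  assumes "g \<noteq> 0"
  shows "card ((\<lambda>r. a + r * g) ` {s..t}) = nat (t - s + 1)"
proof -
  have "inj_on (\<lambda>r. a + r * g) {s..t}" using assms by (auto simp: inj_on_def)
  then show ?thesis by (simp add: card_image)
qed

lemma card_distinct_sumset_arith_prog:
  fixes a g s t :: int
  assumes "g \<noteq> 0" "s < t"
  shows "card (distinct_sumset ((\<lambda>r. a + r * g) ` {s..t})) = 2 * nat (t - s + 1) - 3"
proof (rule antisym)
  have "card (distinct_sumset ((\<lambda>r. a + r * g) ` {s..t}))
      \<le> card ((\<lambda>j. 2 * a + j * g) ` {2 * s + 1..2 * t - 1})"
    by (intro card_mono distinct_sumset_arith_prog_subset) auto
  also have "\<dots> \<le> card {2 * s + 1..2 * t - 1}" by (rule card_image_le) auto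
  finally show "card (distinct_sumset ((\<lambda>r. a + r * g) ` {s..t})) \<le> 2 * nat (t - s + 1) - 3"
    using assms(2) by simp
  show "2 * nat (t - s + 1) - 3 \<le> card (distinct_sumset ((\<lambda>r. a + r * g) ` {s..t}))"
    using card_distinct_sumset_ge[of "(\<lambda>r. a + r * g) ` {s..t}"] card_arith_prog[OF assms(1)] assms(2)
    by simp
qed

lemma card_eq_5_sortedE:
  fixes A :: "'a::linorder set"
  assumes "finite A" "card A = 5"
  obtains a1 a2 a3 a4 a5 where "a1 < a2" "a2 < a3" "a3 < a4" "a4 < a5" "A = {a1, a2, a3, a4, a5}"
proof -
  define l where "l = sorted_list_of_set A"
  have "length l = 5" using assms by (simp add: l_def)
  then obtain a1 a2 a3 a4 a5 where l: "l = [a1, a2, a3, a4, a5]"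
    by (auto simp: length_Suc_conv numeral_eq_Suc)
  have "sorted_wrt (<) l" "set l = A" using assms(1) by (simp_all add: l_def)
  then show ?thesis using that unfolding l by auto
qed

lemma arith_prog_of_card_5:
  fixes a1 a2 a3 a4 a5 :: int
  assumes "a1 < a2" "a2 < a3" "a3 < a4" "a4 < a5"
    and "card (distinct_sumset {a1, a2, a3, a4, a5}) \<le> 7"
  shows "{a1, a2, a3, a4, a5} = (\<lambda>r. a1 + r * (a2 - a1)) ` {0..4}"
proof -
  let ?A = "{a1, a2, a3, a4, a5}"
  define C where "C = {a1 + a2, a1 + a3, a1 + a4, a1 + a5, a2 + a5, a3 + a5, a4 + a5}"
  have "C \<subseteq> distinct_sumset ?A" unfolding C_def using assms by (auto intro!: distinct_sumsetI)
  moreover have "card C = 7" unfolding C_def using assms by auto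
  ultimately have C: "C = distinct_sumset ?A"
    using assms(5) by (intro card_seteq finite_distinct_sumset) auto
  \<comment> \<open>The inner sums lie strictly between \<open>a1 + a3\<close> and \<open>a3 + a5\<close>, so they must be the
    remaining three elements of \<open>C\<close>, in order.\<close>
  have "a2 + a3 \<in> C" "a2 + a4 \<in> C" "a3 + a4 \<in> C"
    unfolding C using assms by (auto intro!: distinct_sumsetI)
  then have "a2 + a3 = a1 + a4" "a2 + a4 = a1 + a5" "a3 + a4 = a2 + a5"
    unfolding C_def using assms by auto
  moreover have "{0..4::int} = {0, 1, 2, 3, 4}" by auto
  ultimately show ?thesis by (auto simp: algebra_simps)
qed

lemma arith_prog_insert_above_sums:
  fixes a g m n :: int
  assumes "g > 0" "n \<ge> 2" and B: "B = (\<lambda>r. a + r * g) ` {0..n}" and "a + n * g < m"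
    and card_le: "card (distinct_sumset (insert m B)) \<le> 2 * card B - 1"
  shows "(\<lambda>i. m + (a + i * g)) ` {0..n - 2} \<subseteq> distinct_sumset B"
proof -
  define T where "T = (+) m ` B"
  define T' where "T' = (\<lambda>i. m + (a + i * g)) ` {0..n - 2}"
  have fin: "finite B" "finite T" "finite (distinct_sumset B)"
    by (simp_all add: B T_def finite_distinct_sumset)
  have card_B: "card B = nat (n + 1)" using card_arith_prog[of g a 0 n] assms(1) B by simp
  have card_T: "card T = card B" unfolding T_def by (simp add: card_image)
  have card_T': "card T' = nat (n - 1)"
    using card_arith_prog[of g "m + a" 0 "n - 2"] assms(1) by (simp add: T'_def add.assoc)
  have card_sums_B: "card (distinct_sumset B) = 2 * card B - 3"
    using card_distinct_sumset_arith_prog[of g 0 n a] assms(1,2) card_B B by simp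
  have "distinct_sumset B \<inter> T \<subseteq> T'"
  proof
    fix x assume x: "x \<in> distinct_sumset B \<inter> T"
    then obtain i where i: "i \<in> {0..n}" "x = m + (a + i * g)" unfolding T_def B by auto
    have "i < n - 1"
    proof (rule ccontr)
      assume "\<not> i < n - 1"
      then have "(n - 1) * g \<le> i * g" using assms(1) by (simp add: mult_right_mono)
      then have "2 * a + (2 * n - 1) * g < x"
        using i(2) assms(4) by (simp add: left_diff_distrib)
      moreover have "x \<le> 2 * a + (2 * n - 1) * g"
        using distinct_sumset_arith_prog_le[OF assms(1)] x B by blast
      ultimately show False by simp
    qed
    then show "x \<in> T'" using i unfolding T'_def by auto
  qed
  moreover have "card T' \<le> card (distinct_sumset B \<inter> T)"
  proof -
    have "b < m" if b: "b \<in> B" for b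
    proof -
      obtain r where "r \<le> n" "b = a + r * g" using b B by auto
      moreover have "r * g \<le> n * g" using \<open>r \<le> n\<close> assms(1) by (simp add: mult_right_mono)
      ultimately show ?thesis using assms(4) by simp
    qed
    then have "T \<subseteq> distinct_sumset (insert m B)"
      unfolding T_def by (auto intro!: distinct_sumsetI)
    then have "distinct_sumset B \<union> T \<subseteq> distinct_sumset (insert m B)"
      using distinct_sumset_mono[of B "insert m B"] by blast
    then have "card (distinct_sumset B \<union> T) \<le> card (distinct_sumset (insert m B))"
      by (intro card_mono finite_distinct_sumset) (simp add: fin)
    then have "card (distinct_sumset B \<union> T) \<le> 2 * card B - 1" using card_le by linarith
    then show ?thesis
      using card_Un_Int[OF fin(3,2)] card_sums_B card_T card_T' card_B assms(2) by linarith
  qed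
  ultimately have "distinct_sumset B \<inter> T = T'"
    by (intro card_seteq) (simp_all add: T'_def)
  then show ?thesis unfolding T'_def by blast
qed

lemma arith_prog_insert_above:
  fixes a g m n :: int
  assumes "g > 0" "n \<ge> 2" and B: "B = (\<lambda>r. a + r * g) ` {0..n}" and "a + n * g < m"
    and "card (distinct_sumset (insert m B)) \<le> 2 * card B - 1"
  shows "m = a + (n + 1) * g"
proof -
  have "m + (a + i * g) \<in> distinct_sumset B" if "0 \<le> i" "i \<le> n - 2" for i
    using subsetD[OF arith_prog_insert_above_sums[OF assms] imageI[of i "{0..n - 2}"]] that by simp
  from this[of 0] this[of "n - 2"] assms(2)
  have sums: "m + (a + 0 * g) \<in> distinct_sumset B" "m + (a + (n - 2) * g) \<in> distinct_sumset B"
    by simp_all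
  have "m + a \<in> (\<lambda>j. 2 * a + j * g) ` {1..2 * n - 1}"
    using sums(1) distinct_sumset_arith_prog_subset[of a g 0 n] B by auto
  then obtain j where "m + a = 2 * a + j * g" by blast
  then have m: "m = a + j * g" by simp
  have "m + (a + (n - 2) * g) \<le> 2 * a + (2 * n - 1) * g"
    using distinct_sumset_arith_prog_le[OF assms(1)] sums(2) B by blast
  then have "j * g \<le> (n + 1) * g" unfolding m by (simp add: algebra_simps)
  moreover have "n * g < j * g" using assms(4) unfolding m by simp
  ultimately have "j = n + 1" using assms(1) by (simp add: mult_less_cancel_right mult_le_cancel_right)
  then show ?thesis using m by simp
qed

theorem arith_prog_if_card_distinct_sumset_le:
  fixes A :: "int set"
  assumes "finite A" "card A \<ge> 5" "card (distinct_sumset A) \<le> 2 * card A - 3"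
  shows "\<exists>a g. g > 0 \<and> A = (\<lambda>r. a + r * g) ` {0..int (card A) - 1}"
  using assms(2,1,3)
proof (induction "card A" arbitrary: A rule: nat_induct_at_least)
  case base
  then obtain a1 a2 a3 a4 a5 where "a1 < a2" "a2 < a3" "a3 < a4" "a4 < a5" "A = {a1, a2, a3, a4, a5}"
    by (metis card_eq_5_sortedE)
  moreover from this have "A = (\<lambda>r. a1 + r * (a2 - a1)) ` {0..4}"
    using arith_prog_of_card_5 base by simp
  moreover have "{0..int (card A) - 1} = {0..4}" using base.hyps by simp
  ultimately show ?case by (metis diff_gt_0_iff_gt)
next
  case (Suc k)
  define B where "B = A - {Max A}"
  have "A \<noteq> {}" using Suc by auto
  then have "Max A \<in> A" using Suc by simp
  then have A: "A = insert (Max A) B" and "finite B" "card B = k"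
    using Suc by (auto simp: B_def)
  have below: "\<And>b. b \<in> B \<Longrightarrow> b < Max A"
    using Suc.prems by (auto simp: B_def order.strict_iff_order)
  then have "card (distinct_sumset B) + 2 \<le> card (distinct_sumset A)"
    using card_distinct_sumset_insert_above[of B "Max A"] A \<open>finite B\<close> \<open>card B = k\<close> Suc.hyps
    by simp
  then have "card (distinct_sumset B) \<le> 2 * card B - 3"
    using Suc.prems(2) Suc.hyps(3) \<open>card B = k\<close> by linarith
  then obtain a g where "g > 0" and B: "B = (\<lambda>r. a + r * g) ` {0..int k - 1}"
    using Suc.hyps(2)[of B] \<open>finite B\<close> \<open>card B = k\<close> by blast
  have "a + (int k - 1) * g \<in> B" unfolding B using Suc.hyps(1) by auto
  then have "Max A = a + int k * g"
    using arith_prog_insert_above[OF \<open>g > 0\<close> _ B, of "Max A"] below Suc.hyps Suc.prems(2) A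
      \<open>card B = k\<close> by simp
  then have "A = insert (a + int k * g) B" using A by simp
  moreover have "{0..int k} = insert (int k) {0..int k - 1}" by auto
  ultimately have "A = (\<lambda>r. a + r * g) ` {0..int k}" using B by simp
  moreover have "int (card A) - 1 = int k" using Suc.hyps(3) by simp
  ultimately have "A = (\<lambda>r. a + r * g) ` {0..int (card A) - 1}" by simp
  then show ?case using \<open>g > 0\<close> by blast
qed

lemma arith_prog_reindex:
  fixes a g c s t :: int
  shows "(\<lambda>r. a + r * g) ` {s..t} = (\<lambda>r. (a + c * g) + r * g) ` {s - c..t - c}"
proof -
  have "(\<lambda>r. (a + c * g) + r * g) ` {s - c..t - c} = (\<lambda>r. (a + c * g) + r * g) ` (\<lambda>r. r + - c) ` {s..t}"
    by simp
  also have "\<dots> = (\<lambda>r. a + r * g) ` {s..t}"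
    by (simp only: image_image) (simp add: algebra_simps)
  finally show ?thesis ..
qed

lemma arith_prog_with_opposite_pair:
  fixes a g n x :: int
  assumes "g > 0" and A: "A = (\<lambda>r. a + r * g) ` {0..n}" and "x > 0" "x \<in> A" "- x \<in> A"
  shows "(\<exists>s t. s \<le> -1 \<and> t \<ge> 1 \<and> t - s = n \<and> A = {r * g | r. s \<le> r \<and> r \<le> t}) \<or>
    (\<exists>d s t. d \<noteq> 0 \<and> s \<le> 0 \<and> t \<ge> 1 \<and> t - s = n \<and> A = {(2 * r - 1) * d | r. s \<le> r \<and> r \<le> t})"
proof -
  obtain i j where ij: "i \<in> {0..n}" "j \<in> {0..n}" "x = a + i * g" "- x = a + j * g"
    using assms(4,5) A by auto
  then have sum: "2 * a + (i + j) * g = 0" by (simp add: algebra_simps)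
  have "j * g < i * g" using ij(3,4) assms(3) by simp
  then have "j < i" using assms(1) by (simp add: mult_less_cancel_right)
  have A': "A = (\<lambda>r. (a + m * g) + r * g) ` {- m..n - m}" for m
    using arith_prog_reindex[of a g 0 n m] A by simp
  consider (even) m where "i + j = 2 * m" | (odd) m where "i + j = 2 * m + 1"
    by (metis evenE oddE)
  then show ?thesis
  proof cases
    case even
    then have "a + m * g = 0" using sum by (simp add: algebra_simps)
    then have "A = {r * g | r. - m \<le> r \<and> r \<le> n - m}" using A'[of m] by auto
    moreover have "- m \<le> -1" "n - m \<ge> 1" using even \<open>j < i\<close> ij(1,2) by auto
    ultimately show ?thesis by (intro disjI1 exI[of _ "- m"] exI[of _ "n - m"]) auto
  next
    case odd
    define d where "d = - (a + m * g)"
    have "g = 2 * d" using sum odd unfolding d_def by (simp add: algebra_simps)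
    have "a + m * g = - d" by (simp add: d_def)
    then have "(a + m * g) + r * g = (2 * r - 1) * d" for r
      by (subst \<open>a + m * g = - d\<close>) (simp add: \<open>g = 2 * d\<close> algebra_simps)
    then have "A = {(2 * r - 1) * d | r. - m \<le> r \<and> r \<le> n - m}" using A'[of m] by auto
    moreover have "d \<noteq> 0" using \<open>g = 2 * d\<close> assms(1) by auto
    moreover have "- m \<le> 0" "n - m \<ge> 1" using odd \<open>j < i\<close> ij(1,2) by auto
    ultimately show ?thesis by (intro disjI2 exI[of _ d] exI[of _ "- m"] exI[of _ "n - m"]) auto
  qed
qed

lemma card_ge_5_with_opposite_pair:
  fixes A :: "int set"
  assumes "finite A" "card A \<ge> 5" "card (distinct_sumset A) \<le> 2 * card A - 3"
    and "x > 0" "x \<in> A" "- x \<in> A"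
  shows "(\<exists>d s t::int. d \<noteq> 0 \<and> s \<le> -1 \<and> t \<ge> 1 \<and> t - s \<ge> 4 \<and> A = {r * d | r. s \<le> r \<and> r \<le> t}) \<or>
    (\<exists>d s t::int. d \<noteq> 0 \<and> s \<le> 0 \<and> t \<ge> 1 \<and> t - s \<ge> 4 \<and> A = {(2 * r - 1) * d | r. s \<le> r \<and> r \<le> t})"
proof -
  obtain a g where "g > 0" "A = (\<lambda>r. a + r * g) ` {0..int (card A) - 1}"
    using arith_prog_if_card_distinct_sumset_le[OF assms(1-3)] by blast
  from arith_prog_with_opposite_pair[OF this assms(4-6)]
  show ?thesis
  proof (elim disjE exE conjE)
    fix s t assume "s \<le> -1" "t \<ge> 1" "t - s = int (card A) - 1" "A = {r * g | r. s \<le> r \<and> r \<le> t}"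
    then show ?thesis
      using \<open>g > 0\<close> assms(2)
      by (intro disjI1) (rule exI[of _ g], rule exI[of _ s], rule exI[of _ t], simp)
  next
    fix d s t assume "d \<noteq> 0" "s \<le> 0" "t \<ge> 1" "t - s = int (card A) - 1"
      "A = {(2 * r - 1) * d | r. s \<le> r \<and> r \<le> t}"
    then show ?thesis
      using assms(2) by (intro disjI2) (rule exI[of _ d], rule exI[of _ s], rule exI[of _ t], simp)
  qed
qed

lemma card_3_with_opposite_pair:
  fixes A :: "int set"
  assumes "finite A" "card A = 3" "x > 0" "x \<in> A" "- x \<in> A"
  shows "\<exists>c d::int. d > 0 \<and> \<bar>c\<bar> \<noteq> d \<and> A = {c, d, - d}"
proof -
  have "{x, - x} \<subseteq> A" "card {x, - x} = 2" using assms(3-5) by auto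
  then have "card (A - {x, - x}) = 1" using assms(1,2) by (simp add: card_Diff_subset)
  then obtain c where c: "A - {x, - x} = {c}" by (rule card_1_singletonE)
  then have "A = {c, x, - x}" using assms(4,5) by auto
  moreover have "c \<noteq> x" "c \<noteq> - x" using c by blast+
  then have "\<bar>c\<bar> \<noteq> x" by (simp add: abs_if)
  ultimately show ?thesis using assms(3) by blast
qed

lemma card_4_with_opposite_pair:
  fixes A :: "int set"
  assumes "finite A" "card A = 4" "card (distinct_sumset A) \<le> 5" "x > 0" "x \<in> A" "- x \<in> A"
  shows "(\<exists>c d::int. c > 0 \<and> d > 0 \<and> c \<noteq> d \<and> A = {c, - c, d, - d}) \<or>
    (\<exists>c d::int. d > 0 \<and> c \<noteq> 0 \<and> c \<noteq> 2 * d \<and> c \<noteq> - 2 * d \<and> A = {d, - d} \<union> {c + d, c - d})"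
proof -
  have "{x, - x} \<subseteq> A" "card {x, - x} = 2" using assms(4-6) by auto
  then have "card (A - {x, - x}) = 2" using assms(1,2) by (simp add: card_Diff_subset)
  then obtain u v where uv: "A - {x, - x} = {u, v}" "u \<noteq> v" by (meson card_2_iff)
  then have A: "A = {x, - x, u, v}" using assms(5,6) by auto
  have new: "u \<noteq> x" "u \<noteq> - x" "v \<noteq> x" "v \<noteq> - x" using uv(1) by blast+
  \<comment> \<open>Otherwise the six sums below are pairwise distinct.\<close>
  have "u + v = 0 \<or> v - u = 2 * x \<or> u - v = 2 * x"
  proof (rule ccontr)
    assume "\<not> ?thesis"
    then have "card {x + - x, x + u, x + v, - x + u, - x + v, u + v} = 6"
      using new uv(2) assms(4) by auto
    moreover have "{x + - x, x + u, x + v, - x + u, - x + v, u + v} \<subseteq> distinct_sumset A"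
      using new uv(2) assms(4)
      by (intro insert_subsetI empty_subsetI distinct_sumsetI) (auto simp: A)
    ultimately have "6 \<le> card (distinct_sumset A)"
      using card_mono[OF finite_distinct_sumset[OF assms(1)]] by metis
    then show False using assms(3) by simp
  qed
  then consider "u + v = 0" | "v - u = 2 * x" | "u - v = 2 * x" by blast
  then show ?thesis
  proof cases
    case 1
    then have "A = {x, - x, \<bar>u\<bar>, - \<bar>u\<bar>}" "\<bar>u\<bar> > 0" "\<bar>u\<bar> \<noteq> x"
      using A new uv(2) by (auto simp: abs_if)
    then show ?thesis
      using assms(4) by (intro disjI1) (rule exI[of _ x], rule exI[of _ "\<bar>u\<bar>"], auto)
  next
    case 2
    then have "A = {x, - x} \<union> {(u + x) + x, (u + x) - x}" using A by auto
    moreover have "u + x \<noteq> 0" "u + x \<noteq> 2 * x" "u + x \<noteq> - 2 * x" using new 2 by auto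
    ultimately show ?thesis
      using assms(4) by (intro disjI2) (rule exI[of _ "u + x"], rule exI[of _ x], simp)
  next
    case 3
    then have "A = {x, - x} \<union> {(v + x) + x, (v + x) - x}" using A by auto
    moreover have "v + x \<noteq> 0" "v + x \<noteq> 2 * x" "v + x \<noteq> - 2 * x" using new 3 by auto
    ultimately show ?thesis
      using assms(4) by (intro disjI2) (rule exI[of _ "v + x"], rule exI[of _ x], simp)
  qed
qed

lemma card_le_length_if_subset_set: "S \<subseteq> set xs \<Longrightarrow> card S \<le> length xs"
  using card_length card_mono[of "set xs" S] by (meson List.finite_set le_trans)

lemma distinct_sumset_opposite_pair_and_point:
  fixes c d :: int
  assumes "d > 0" "\<bar>c\<bar> \<noteq> d"
  defines "A \<equiv> {c, d, - d}"
  shows "0 \<in> distinct_sumset A \<and> card (distinct_sumset A) \<le> 2 * card A - 3"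
proof
  show "0 \<in> distinct_sumset A"
    using distinct_sumsetI[of d A "- d"] assms(1) by (simp add: A_def)
  have "card (distinct_sumset A) \<le> length [c + d, c - d, 0]"
    unfolding A_def by (intro card_le_length_if_subset_set distinct_sumset_subsetI) auto
  moreover have "c \<noteq> d" "c \<noteq> - d" using assms(1,2) by auto
  then have "card A = 3" using assms(1) by (simp add: A_def)
  ultimately show "card (distinct_sumset A) \<le> 2 * card A - 3" by simp
qed

lemma distinct_sumset_two_opposite_pairs:
  fixes c d :: int
  assumes "c > 0" "d > 0" "c \<noteq> d"
  defines "A \<equiv> {c, - c, d, - d}"
  shows "0 \<in> distinct_sumset A \<and> card (distinct_sumset A) \<le> 2 * card A - 3"
proof
  show "0 \<in> distinct_sumset A"
    using distinct_sumsetI[of d A "- d"] assms(2) by (simp add: A_def)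
  have "card (distinct_sumset A) \<le> length [0, c + d, c - d, d - c, - c - d]"
    unfolding A_def by (intro card_le_length_if_subset_set distinct_sumset_subsetI) auto
  moreover have "card A = 4" using assms by (auto simp: A_def)
  ultimately show "card (distinct_sumset A) \<le> 2 * card A - 3" by simp
qed

lemma distinct_sumset_opposite_pair_and_shifted_pair:
  fixes c d :: int
  assumes "d > 0" "c \<noteq> 0" "c \<noteq> 2 * d" "c \<noteq> - 2 * d"
  defines "A \<equiv> {d, - d} \<union> {c + d, c - d}"
  shows "0 \<in> distinct_sumset A \<and> card (distinct_sumset A) \<le> 2 * card A - 3"
proof
  show "0 \<in> distinct_sumset A"
    using distinct_sumsetI[of d A "- d"] assms(1) by (simp add: A_def)
  have "card (distinct_sumset A) \<le> length [0, c + 2 * d, c, c - 2 * d, 2 * c]"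
    unfolding A_def by (intro card_le_length_if_subset_set distinct_sumset_subsetI) auto
  moreover have "card A = 4" using assms by (auto simp: A_def)
  ultimately show "card (distinct_sumset A) \<le> 2 * card A - 3" by simp
qed

lemma distinct_sumset_symmetric_multiples:
  fixes d s t :: int
  assumes "d \<noteq> 0" "s \<le> -1" "t \<ge> 1"
  defines "A \<equiv> {r * d | r. s \<le> r \<and> r \<le> t}"
  shows "0 \<in> distinct_sumset A \<and> card (distinct_sumset A) \<le> 2 * card A - 3"
proof
  have A: "A = (\<lambda>r. 0 + r * d) ` {s..t}" unfolding A_def by auto
  have "0 + 1 * d \<in> A" "0 + (- 1) * d \<in> A" unfolding A using assms(2,3) by (intro imageI; simp)+
  then show "0 \<in> distinct_sumset A" using distinct_sumsetI[of d A "- d"] assms(1) by simp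
  show "card (distinct_sumset A) \<le> 2 * card A - 3"
    using card_distinct_sumset_arith_prog[OF assms(1), of s t 0] card_arith_prog[OF assms(1), of 0 s t]
      assms(2,3) unfolding A by simp
qed

lemma distinct_sumset_symmetric_odd_multiples:
  fixes d s t :: int
  assumes "d \<noteq> 0" "s \<le> 0" "t \<ge> 1"
  defines "A \<equiv> {(2 * r - 1) * d | r. s \<le> r \<and> r \<le> t}"
  shows "0 \<in> distinct_sumset A \<and> card (distinct_sumset A) \<le> 2 * card A - 3"
proof
  have "2 * d \<noteq> 0" using assms(1) by simp
  have A: "A = (\<lambda>r. - d + r * (2 * d)) ` {s..t}" unfolding A_def by (auto simp: algebra_simps)
  have "- d + 1 * (2 * d) \<in> A" "- d + 0 * (2 * d) \<in> A" unfolding A using assms(2,3) by (intro imageI; simp)+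
  then show "0 \<in> distinct_sumset A" using distinct_sumsetI[of d A "- d"] assms(1) by simp
  show "card (distinct_sumset A) \<le> 2 * card A - 3"
    using card_distinct_sumset_arith_prog[OF \<open>2 * d \<noteq> 0\<close>, of s t "- d"]
      card_arith_prog[OF \<open>2 * d \<noteq> 0\<close>, of "- d" s t] assms(2,3) unfolding A by simp
qed

lemma card_restricted_sumset_2_eq_iff:
  fixes A :: "int set"
  assumes "finite A" "card A \<ge> 2"
  shows "int (card (restricted_sumset 2 A)) = 2 * int (card A) - 4 \<longleftrightarrow>
    0 \<in> distinct_sumset A \<and> card (distinct_sumset A) \<le> 2 * card A - 3"
proof -
  have "2 * card A - 3 \<le> card (distinct_sumset A)"
    using card_distinct_sumset_ge[OF assms] .
  moreover have "card (restricted_sumset 2 A) = card (distinct_sumset A) - (if 0 \<in> distinct_sumset A then 1 else 0)"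
    using finite_distinct_sumset[OF assms(1)] by (simp add: restricted_sumset_2_eq card_Diff_singleton_if)
  ultimately show ?thesis using assms(2) by (cases "0 \<in> distinct_sumset A") (simp_all, arith+)
qed

theorem theorem1p3:
  fixes A :: "int set"
  assumes "finite A" and "card A \<ge> 3"
  shows "int (card (restricted_sumset 2 A)) = 2 * int (card A) - 4 \<longleftrightarrow>
    ((\<exists>c d::int. d > 0 \<and> \<bar>c\<bar> \<noteq> d \<and> A = {c, d, -d}) \<or>
     (\<exists>c d::int. c > 0 \<and> d > 0 \<and> c \<noteq> d \<and> A = {c, -c, d, -d}) \<or>
     (\<exists>c d::int. d > 0 \<and> c \<noteq> 0 \<and> c \<noteq> 2*d \<and> c \<noteq> -2*d \<and> A = {d, -d} \<union> {c + d, c - d}) \<or>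
     (\<exists>d s t::int. d \<noteq> 0 \<and> s \<le> -1 \<and> t \<ge> 1 \<and> t - s \<ge> 4 \<and> A = {r * d | r. s \<le> r \<and> r \<le> t}) \<or>
     (\<exists>d s t::int. d \<noteq> 0 \<and> s \<le> 0 \<and> t \<ge> 1 \<and> t - s \<ge> 4 \<and> A = {(2*r - 1) * d | r. s \<le> r \<and> r \<le> t}))"
  (is "_ \<longleftrightarrow> ?families")
proof -
  have "int (card (restricted_sumset 2 A)) = 2 * int (card A) - 4 \<longleftrightarrow>
      0 \<in> distinct_sumset A \<and> card (distinct_sumset A) \<le> 2 * card A - 3"
    using card_restricted_sumset_2_eq_iff[OF assms(1)] assms(2) by simp
  also have "\<dots> \<longleftrightarrow> ?families"
  proof
    assume extremal: "0 \<in> distinct_sumset A \<and> card (distinct_sumset A) \<le> 2 * card A - 3"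
    then obtain x where x: "x > 0" "x \<in> A" "- x \<in> A" using zero_in_distinct_sumset_iff by blast
    consider "card A = 3" | "card A = 4" | "card A \<ge> 5" using assms(2) by linarith
    then show ?families
    proof cases
      case 1
      then show ?thesis using card_3_with_opposite_pair[OF assms(1) 1 x] by blast
    next
      case 2
      then have "card (distinct_sumset A) \<le> 5" using extremal by simp
      then show ?thesis using card_4_with_opposite_pair[OF assms(1) 2 _ x] by blast
    next
      case 3
      then show ?thesis using card_ge_5_with_opposite_pair[OF assms(1) 3 _ x] extremal by blast
    qed
  next
    assume ?families
    then show "0 \<in> distinct_sumset A \<and> card (distinct_sumset A) \<le> 2 * card A - 3"
      using distinct_sumset_opposite_pair_and_point distinct_sumset_two_opposite_pairs
        distinct_sumset_opposite_pair_and_shifted_pair distinct_sumset_symmetric_multiples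
        distinct_sumset_symmetric_odd_multiples
      by (elim disjE exE conjE) simp_all
  qed
  finally show ?thesis .
qed

end
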